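(* Let $n=p'pq$ where $p',p,q$ are distinct odd primes, let $A=L(n;p')$, and let $n'=n/p$. Then $U(n')\subseteq f(A)$, where $f:\mathbb{Z}_n\to\mathbb{Z}_{n'}$ is the natural map.
   Context: $U(m)$ is the unit group of $\mathbb{Z}_m$. For odd $m=\prod p_i^{r_i}$, prime $p\mid m$ and $a\in U(m)$, $\left(\frac{a}{p}\right)$ is the Legendre symbol of the image of $a$ mod $p$ and $\left(\frac{a}{m}\right)=\prod\left(\frac{a}{p_i}\right)^{r_i}$; $L(m;p')=\{a\in U(m):\left(\frac{a}{m}\right)=\left(\frac{a}{p'}\right)\}$ for a prime $p'\mid m$. The natural map $\mathbb{Z}_n\to\mathbb{Z}_{n'}$ is $a+n\mathbb{Z}\mapsto a+n'\mathbb{Z}$. *)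

theory Defs
  imports "HOL-Number_Theory.Number_Theory"
begin

text \<open>Elements of Z_m are represented by their least nonnegative residues 0..m-1.\<close>

definition U :: "nat \<Rightarrow> nat set" where
  "U m = {a. a < m \<and> coprime a m}"

definition jac :: "nat \<Rightarrow> nat \<Rightarrow> int" where
  "jac a m = (\<Prod>p\<in>prime_factors m. Legendre (int a) (int p) ^ multiplicity p m)"

definition L :: "nat \<Rightarrow> nat \<Rightarrow> nat set" where
  "L m p' = {a \<in> U m. jac a m = Legendre (int a) (int p')}"

definition natmap :: "nat \<Rightarrow> nat \<Rightarrow> nat" where
  "natmap n' a = a mod n'"

end

theory Submission
  imports Defs
begin

text \<open>
  Given a unit b modulo p'q, choose r with (r/p) = (b/q); this is possible since a primitive
  root modulo the odd prime p is a quadratic non-residue. Gluing b and r by the Chinese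
  remainder theorem gives a unit a modulo n with (a/n) = (a/p')(b/q)^2 = (a/p'),
  so a lies in L(n;p') and reduces to b modulo n/p.
\<close>

lemma Legendre_cong:
  assumes "[a = b] (mod m)"
  shows "Legendre a m = Legendre b m"
proof -
  have "[a = 0] (mod m) \<longleftrightarrow> [b = 0] (mod m)"
    using assms cong_sym cong_trans by blast
  moreover have "QuadRes m a \<longleftrightarrow> QuadRes m b"
    unfolding QuadRes_def using assms cong_sym cong_trans by blast
  ultimately show ?thesis
    unfolding Legendre_def by simp
qed

lemma Legendre_cong_dvd_modulus:
  fixes a b m p :: nat
  assumes "[a = b] (mod m)" "p dvd m"
  shows "Legendre (int a) (int p) = Legendre (int b) (int p)"
  using assms by (intro Legendre_cong) (simp add: cong_int_iff cong_dvd_modulus_nat)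

lemma Legendre_eq_0_iff:
  fixes a p :: nat
  assumes "prime p"
  shows "Legendre (int a) (int p) = 0 \<longleftrightarrow> \<not> coprime a p"
proof -
  have "Legendre (int a) (int p) = 0 \<longleftrightarrow> p dvd a"
    by (simp add: Legendre_def cong_0_iff)
  also have "\<dots> \<longleftrightarrow> \<not> coprime a p"
    using assms prime_imp_coprime[of p a] by (auto simp: coprime_commute dest: prime_gt_1_nat)
  finally show ?thesis .
qed

lemma Legendre_coprime_sign:
  fixes a p :: nat
  assumes "prime p" "coprime a p"
  shows "Legendre (int a) (int p) \<in> {1, -1}"
  using assms Legendre_eq_0_iff[of p a] unfolding Legendre_def by (auto split: if_splits)

lemma Legendre_residue_primroot:
  fixes p g :: nat
  assumes "prime p" "odd p" and g: "residue_primroot p g"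
  shows "Legendre (int g) (int p) = -1"
proof -
  have p: "p > 2"
    using assms prime_ge_2_nat[of p] by (cases "p = 2") auto
  have ord: "ord p g = p - 1" and "coprime g p"
    using g assms(1) by (auto simp: residue_primroot_def totient_prime coprime_commute)
  then have sign: "Legendre (int g) (int p) \<in> {1, -1}"
    using Legendre_coprime_sign assms(1) by blast
  have "Legendre (int g) (int p) \<noteq> 1"
  proof
    assume "Legendre (int g) (int p) = 1"
    then have "[int (g ^ ((p - 1) div 2)) = int 1] (mod int p)"
      using euler_criterion[OF assms(1) p, of "int g"] by (simp add: cong_sym_eq)
    then have "ord p g dvd (p - 1) div 2"
      by (simp only: cong_int_iff ord_divides)
    then show False
      using ord p by (auto dest: dvd_imp_le)
  qed
  with sign show ?thesis
    by simp
qed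

lemma Legendre_sign_attained:
  fixes p :: nat and s :: int
  assumes "prime p" "odd p" "s \<in> {1, -1}"
  obtains r :: nat where "coprime r p" "Legendre (int r) (int p) = s"
proof (cases "s = 1")
  case True
  have "\<not> [1 = 0] (mod int p)"
    using prime_gt_1_nat[OF assms(1)] by (simp add: cong_def)
  moreover have "QuadRes (int p) 1"
    unfolding QuadRes_def by (rule exI[of _ 1]) simp
  ultimately have "Legendre (int 1) (int p) = s"
    using True by (simp add: Legendre_def)
  then show ?thesis
    by (rule that[rotated]) simp
next
  case False
  then have "s = -1"
    using assms(3) by simp
  obtain g where "residue_primroot p g"
    using prime_primitive_root_exists prime_gt_1_nat assms(1) by blast
  then have "Legendre (int g) (int p) = s"
    using Legendre_residue_primroot assms(1,2) \<open>s = -1\<close> by simp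
  moreover from this have "coprime g p"
    using Legendre_eq_0_iff[OF assms(1), of g] \<open>s = -1\<close> by simp
  ultimately show ?thesis
    using that by blast
qed

lemma jac_three_distinct_primes:
  fixes p' p q a :: nat
  assumes "prime p'" "prime p" "prime q" "p' \<noteq> p" "p' \<noteq> q" "p \<noteq> q"
  shows "jac a (p' * p * q) =
    Legendre (int a) (int p') * Legendre (int a) (int p) * Legendre (int a) (int q)"
proof -
  have factorization: "prime_factorization (p' * p * q) = {#p', p, q#}"
    using assms by (simp add: prime_factorization_mult prime_factorization_prime prime_gt_0_nat
        flip: One_nat_def)
  have "multiplicity x (p' * p * q) = 1" if "x \<in> {p', p, q}" for x
    using that assms count_prime_factorization_prime[of x "p' * p * q"]
    by (auto simp: factorization)
  then have "jac a (p' * p * q) = (\<Prod>x\<in>{p', p, q}. Legendre (int a) (int x))"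
    unfolding jac_def factorization by (intro prod.cong) auto
  then show ?thesis
    using assms by simp
qed

lemma jac_three_distinct_primes_eq_Legendre:
  fixes p' p q a :: nat
  assumes "prime p'" "prime p" "prime q" "p' \<noteq> p" "p' \<noteq> q" "p \<noteq> q"
    and "coprime a q" "Legendre (int a) (int p) = Legendre (int a) (int q)"
  shows "jac a (p' * p * q) = Legendre (int a) (int p')"
  using jac_three_distinct_primes[OF assms(1-6), of a] Legendre_coprime_sign[OF assms(3,7)] assms(8)
  by auto

lemma U_mult_lift:
  fixes m p b r :: nat
  assumes "coprime m p" "0 < p" "b \<in> U m" "coprime r p"
  obtains a where "a \<in> U (m * p)" "a mod m = b" "[a = r] (mod p)"
proof -
  obtain x where x: "[x = b] (mod m)" "[x = r] (mod p)"
    using binary_chinese_remainder_nat[OF assms(1)] by blast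
  define a where "a = x mod (m * p)"
  have b: "b < m" "coprime b m"
    using assms(3) by (auto simp: U_def)
  have am: "[a = b] (mod m)" and ap: "[a = r] (mod p)"
    using x unfolding a_def by (simp_all add: mod_mult_cong_right mod_mult_cong_left)
  have "coprime a m" "coprime a p"
    using cong_imp_coprime[OF cong_sym[OF am]] cong_imp_coprime[OF cong_sym[OF ap]] b assms(4)
    by auto
  moreover have "a < m * p"
    unfolding a_def using b(1) assms(2) by simp
  ultimately have "a \<in> U (m * p)"
    by (simp add: U_def)
  moreover have "a mod m = b"
    using am b(1) by (simp add: cong_def)
  ultimately show ?thesis
    using that ap by blast
qed

theorem lemma5p2:
  fixes p' p q n :: nat
  assumes "prime p'" "prime p" "prime q"
    and "odd p'" "odd p" "odd q"
    and "p' \<noteq> p" "p' \<noteq> q" "p \<noteq> q"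
    and "n = p' * p * q"
  shows "U (n div p) \<subseteq> natmap (n div p) ` L n p'"
proof
  fix b
  assume "b \<in> U (n div p)"
  have n: "n div p = p' * q" "n = p' * q * p"
    using assms(2,10) prime_gt_0_nat by auto
  with \<open>b \<in> U (n div p)\<close> have b: "b \<in> U (p' * q)"
    by simp
  then have "Legendre (int b) (int q) \<in> {1, -1}"
    using Legendre_coprime_sign assms(3) by (simp add: U_def)
  then obtain r where r: "coprime r p" "Legendre (int r) (int p) = Legendre (int b) (int q)"
    using Legendre_sign_attained[OF assms(2,5)] by blast
  have "coprime (p' * q) p"
    using assms by (simp add: primes_coprime)
  then obtain a where a: "a \<in> U n" "a mod (p' * q) = b" "[a = r] (mod p)"
    using U_mult_lift[OF _ prime_gt_0_nat[OF assms(2)] b r(1)] n(2) by auto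
  have "[a = b] (mod p' * q)"
    using a(2) b by (simp add: cong_def U_def)
  then have "Legendre (int a) (int p) = Legendre (int a) (int q)"
    using Legendre_cong_dvd_modulus[of a b "p' * q" q] Legendre_cong_dvd_modulus[OF a(3)] r(2)
    by simp
  then have "jac a n = Legendre (int a) (int p')"
    using jac_three_distinct_primes_eq_Legendre[OF assms(1-3,7-9)] a(1) assms(10)
    by (simp add: U_def)
  with a(1) have "a \<in> L n p'"
    by (simp add: L_def)
  moreover have "b = natmap (n div p) a"
    by (simp add: natmap_def n(1) a(2))
  ultimately show "b \<in> natmap (n div p) ` L n p'"
    by blast
qed

end
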